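(* Let $G$ be a finite non-abelian group such that $G/Z(G)\cong C_2\times C_2$. Then the non-centralizer graph $\Upsilon_G$ is regular.
   Context: For a finite group $G$, $C_G(x)$ denotes the centralizer of $x\in G$ and $Z(G)$ the center. The non-centralizer graph $\Upsilon_G$ is the simple graph with vertex set $G$ in which two distinct vertices $x,y$ are adjacent if and only if $C_G(x)\neq C_G(y)$. A graph is regular if all its vertices have the same degree. *)

theory Defs
  imports "HOL-Algebra.Algebra"
begin

definition centralizer :: "('a, 'b) monoid_scheme \<Rightarrow> 'a \<Rightarrow> 'a set" where
  "centralizer G x = {y \<in> carrier G. x \<otimes>\<^bsub>G\<^esub> y = y \<otimes>\<^bsub>G\<^esub> x}"

definition center :: "('a, 'b) monoid_scheme \<Rightarrow> 'a set" where
  "center G = {z \<in> carrier G. \<forall>y \<in> carrier G. z \<otimes>\<^bsub>G\<^esub> y = y \<otimes>\<^bsub>G\<^esub> z}"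

definition noncentralizer_adj :: "('a, 'b) monoid_scheme \<Rightarrow> 'a \<Rightarrow> 'a \<Rightarrow> bool" where
  "noncentralizer_adj G x y \<longleftrightarrow> x \<in> carrier G \<and> y \<in> carrier G \<and> x \<noteq> y
     \<and> centralizer G x \<noteq> centralizer G y"

definition noncentralizer_degree :: "('a, 'b) monoid_scheme \<Rightarrow> 'a \<Rightarrow> nat" where
  "noncentralizer_degree G x = card {y \<in> carrier G. noncentralizer_adj G x y}"

definition noncentralizer_graph_regular :: "('a, 'b) monoid_scheme \<Rightarrow> bool" where
  "noncentralizer_graph_regular G \<longleftrightarrow>
     (\<forall>x \<in> carrier G. \<forall>y \<in> carrier G. noncentralizer_degree G x = noncentralizer_degree G y)"

end

theory Submission
  imports Defs
begin

(* Since the centre Z of G has index 4, the centralizer C(x) of a non-central x lies strictly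
   between Z and G and therefore has index 2 over Z, i.e. C(x) = Z \<union> Zx.  Hence C(y) = C(x)
   holds exactly for y in the coset Zx (also for central x), so every vertex is non-adjacent
   precisely to the |Z| elements of its own coset and has degree |G| - |Z|. *)

lemma (in group) inv_commute:
  assumes "a \<in> carrier G" "y \<in> carrier G" "a \<otimes> y = y \<otimes> a"
  shows "inv a \<otimes> y = y \<otimes> inv a"
proof -
  have "a \<otimes> (y \<otimes> inv a) = y"
    using assms by (simp flip: m_assoc) (simp add: m_assoc)
  then show ?thesis
    using assms by (simp add: inv_solve_left')
qed

lemma (in group) centralizer_subgroup:
  assumes "x \<in> carrier G"
  shows "subgroup (centralizer G x) G"
proof (rule subgroupI)
  fix a b
  assume "a \<in> centralizer G x" "b \<in> centralizer G x"
  then have "a \<in> carrier G" "b \<in> carrier G" "x \<otimes> a = a \<otimes> x" "x \<otimes> b = b \<otimes> x"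
    by (auto simp: centralizer_def)
  with assms show "inv a \<in> centralizer G x" "a \<otimes> b \<in> centralizer G x"
    by (auto simp: centralizer_def inv_commute m_assoc[symmetric]) (simp add: m_assoc)
qed (use assms in \<open>auto simp: centralizer_def\<close>)

lemma (in group) center_eq_Inter_centralizer:
  "center G = (\<Inter>x \<in> carrier G. centralizer G x)"
  by (auto simp: center_def centralizer_def)

lemma (in group) center_subgroup: "subgroup (center G) G"
  unfolding center_eq_Inter_centralizer
  by (rule subgroups_Inter) (auto simp: centralizer_subgroup)

lemma (in group) card_subgroup_dvd:
  assumes "subgroup H G" "subgroup K G" "H \<subseteq> K"
  shows "card H dvd card K"
proof -
  interpret K: group "G\<lparr>carrier := K\<rparr>"
    using assms(2) by (rule subgroup_imp_group)
  have "card (rcosets\<^bsub>G\<lparr>carrier := K\<rparr>\<^esub> H) * card H = card K"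
    using K.lagrange[OF subgroup_incl[OF assms]] by (simp add: order_def)
  then show ?thesis
    by (metis dvd_triv_right)
qed

lemma (in group) card_intermediate_subgroup:
  assumes "finite (carrier G)" "Factorial_Ring.prime p"
    and "subgroup H G" "subgroup K G" "H \<subset> K" "K \<subset> carrier G"
    and "card (rcosets H) = p ^ 2"
  shows "card K = p * card H"
proof -
  have "finite K" "finite H"
    using assms(1,5,6) by (meson finite_subset psubset_imp_subset)+
  then have "card H > 0"
    using subgroup.one_closed[OF assms(3)] card_gt_0_iff by blast
  obtain k where k: "card K = card H * k"
    using card_subgroup_dvd[OF assms(3,4)] assms(5) by (auto elim: dvdE)
  have "card K dvd card (carrier G)"
    using lagrange[OF assms(4)] by (metis dvd_triv_right order_def)
  also have "card (carrier G) = card H * p ^ 2"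
    using lagrange[OF assms(3)] assms(7) by (simp add: order_def mult.commute)
  finally have "k dvd p ^ 2"
    using k \<open>card H > 0\<close> by simp
  then obtain i where "i \<le> 2" "k = p ^ i"
    using divides_primepow_nat[OF assms(2)] by blast
  moreover have "k \<noteq> 1"
    using psubset_card_mono[OF \<open>finite K\<close> assms(5)] k by simp
  moreover have "k \<noteq> p ^ 2"
    using psubset_card_mono[OF assms(1,6)] k \<open>card (carrier G) = card H * p ^ 2\<close> by simp
  ultimately have "k = p"
    by (auto simp: le_Suc_eq numeral_2_eq_2)
  with k show ?thesis
    by simp
qed

lemma (in group) centralizer_eq_carrier_iff:
  assumes "x \<in> carrier G"
  shows "centralizer G x = carrier G \<longleftrightarrow> x \<in> center G"
  using assms by (auto simp: centralizer_def center_def)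

lemma (in group) center_subset_centralizer:
  assumes "x \<in> carrier G"
  shows "center G \<subseteq> centralizer G x"
  using assms by (auto simp: centralizer_def center_def)

lemma (in group) mem_centralizer_self:
  assumes "x \<in> carrier G"
  shows "x \<in> centralizer G x"
  using assms by (simp add: centralizer_def)

lemma (in group) centralizer_rcos_center:
  assumes x: "x \<in> carrier G" and y: "y \<in> center G #> x"
  shows "centralizer G y = centralizer G x"
proof -
  obtain z where z: "z \<in> center G" "y = z \<otimes> x"
    using y by (auto simp: r_coset_def)
  then have zc: "z \<in> carrier G"
    by (simp add: center_def)
  have "y \<otimes> w = w \<otimes> y \<longleftrightarrow> x \<otimes> w = w \<otimes> x" if w: "w \<in> carrier G" for w
  proof -
    have "w \<otimes> z = z \<otimes> w"
      using z(1) w by (simp add: center_def)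
    then have "w \<otimes> y = z \<otimes> (w \<otimes> x)"
      using z(2) zc x w by (metis m_assoc)
    moreover have "y \<otimes> w = z \<otimes> (x \<otimes> w)"
      using z zc x w by (simp add: m_assoc)
    ultimately show ?thesis
      using zc x w by simp
  qed
  then show ?thesis
    by (auto simp: centralizer_def)
qed

lemma (in group) centralizer_eq_center_Un_rcos:
  assumes "finite (carrier G)" "card (rcosets (center G)) = 4"
    and x: "x \<in> carrier G" "x \<notin> center G"
  shows "centralizer G x = center G \<union> (center G #> x)"
proof -
  let ?Z = "center G" and ?C = "centralizer G x"
  have C: "subgroup ?C G"
    using x(1) by (rule centralizer_subgroup)
  have Z: "subgroup ?Z G"
    by (rule center_subgroup)
  then have Zc: "?Z \<subseteq> carrier G"
    by (rule subgroup.subset)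
  have "card ?C = 2 * card ?Z"
  proof (rule card_intermediate_subgroup[OF assms(1) two_is_prime_nat Z C])
    show "?Z \<subset> ?C"
      using center_subset_centralizer mem_centralizer_self x by blast
    show "?C \<subset> carrier G"
      using centralizer_eq_carrier_iff subgroup.subset[OF C] x by blast
  qed (use assms(2) in simp)
  have "?Z \<inter> (?Z #> x) = {}"
  proof (rule ccontr)
    assume "?Z \<inter> (?Z #> x) \<noteq> {}"
    then obtain y where y: "y \<in> ?Z" "y \<in> ?Z #> x"
      by blast
    then have "?Z #> x = ?Z"
      using repr_independence[OF y(2) x(1) Z] coset_join2[OF _ Z y(1)] subgroup.mem_carrier[OF Z]
      by simp
    then show False
      using rcos_self[OF x(1) Z] x(2) by simp
  qed
  moreover have "card (?Z #> x) = card ?Z"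
    using card_rcosets_equal[OF rcosetsI[OF Zc x(1)] Zc] by simp
  ultimately have "card (?Z \<union> (?Z #> x)) = card ?C"
    using card_Un_disjoint[OF finite_subset[OF Zc assms(1)]
        finite_subset[OF r_coset_subset_G[OF Zc x(1)] assms(1)]] \<open>card ?C = 2 * card ?Z\<close>
    by simp
  moreover have "?Z \<union> (?Z #> x) \<subseteq> ?C"
    using center_subset_centralizer[OF x(1)] mem_centralizer_self[OF x(1)] subgroup.m_closed[OF C]
    by (auto simp: r_coset_def)
  moreover have "finite ?C"
    using assms(1) subgroup.subset[OF C] finite_subset by blast
  ultimately show ?thesis
    using card_subset_eq by metis
qed

lemma (in group) centralizer_eq_iff_rcos_center:
  assumes "finite (carrier G)" "card (rcosets (center G)) = 4"
    and x: "x \<in> carrier G" and y: "y \<in> carrier G"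
  shows "centralizer G y = centralizer G x \<longleftrightarrow> y \<in> center G #> x"
proof
  assume eq: "centralizer G y = centralizer G x"
  show "y \<in> center G #> x"
  proof (cases "x \<in> center G")
    case True
    then have "y \<in> center G"
      using eq centralizer_eq_carrier_iff[OF x] centralizer_eq_carrier_iff[OF y] by simp
    with True show ?thesis
      using coset_join2[OF x center_subgroup] by simp
  next
    case False
    then have "y \<notin> center G"
      using eq centralizer_eq_carrier_iff[OF x] centralizer_eq_carrier_iff[OF y] by simp
    moreover have "y \<in> centralizer G x"
      using eq mem_centralizer_self[OF y] by simp
    ultimately show ?thesis
      using centralizer_eq_center_Un_rcos[OF assms(1,2) x False] by simp
  qed
qed (rule centralizer_rcos_center[OF x])

lemma (in group) noncentralizer_degree_eq:
  assumes "finite (carrier G)" "x \<in> carrier G"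
  shows "noncentralizer_degree G x
           = card (carrier G) - card {y \<in> carrier G. centralizer G y = centralizer G x}"
proof -
  have "{y \<in> carrier G. noncentralizer_adj G x y}
          = carrier G - {y \<in> carrier G. centralizer G y = centralizer G x}"
    using assms(2) by (auto simp: noncentralizer_adj_def)
  then show ?thesis
    unfolding noncentralizer_degree_def using assms(1) by (simp add: card_Diff_subset)
qed

theorem theorem2p7:
  fixes G (structure)
  assumes "group G"
    and "finite (carrier G)"
    and "\<not> comm_group G"
    and "G Mod (center G) \<cong> DirProd (integer_mod_group 2) (integer_mod_group 2)"
  shows "noncentralizer_graph_regular G"
proof -
  interpret group G by fact
  have index: "card (rcosets (center G)) = 4"
    using iso_same_card[OF assms(4)] by (simp add: FactGroup_def carrier_integer_mod_group)
  have Z: "center G \<subseteq> carrier G"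
    by (rule subgroup.subset[OF center_subgroup])
  have "noncentralizer_degree G x = card (carrier G) - card (center G)"
    if x: "x \<in> carrier G" for x
  proof -
    have "{y \<in> carrier G. centralizer G y = centralizer G x} = center G #> x"
      using centralizer_eq_iff_rcos_center[OF assms(2) index x] r_coset_subset_G[OF Z x] by auto
    moreover have "card (center G #> x) = card (center G)"
      using card_rcosets_equal[OF rcosetsI[OF Z x] Z] by simp
    ultimately show ?thesis
      using noncentralizer_degree_eq[OF assms(2) x] by simp
  qed
  then show ?thesis
    unfolding noncentralizer_graph_regular_def by simp
qed

end
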